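(* Let $\tilde t$ be a Linda template and $\tilde b$ a Linda datum (a finite sequence of names). Then ${\sf Match}(\tilde t;\tilde b)=\sigma$ if and only if $\{{\sf patt}(\tilde t)\,\|\,{\sf patb}(\tilde b)\}=(\sigma\cup\{\mathsf c/x\},\{\mathsf c/x_0,\ldots,\mathsf c/x_n\})$, where $\{x_0,\ldots,x_n\}={\sf bn}({\sf patb}(\tilde b))$, ${\sf dom}(\sigma)\uplus\{x\}={\sf bn}({\sf patt}(\tilde t))$, and $\sigma$ maps names to names.
   Context: CPC patterns over a countable set of names: $p ::= \lambda x \mid x \mid \ulcorner x\urcorner \mid p\bullet p$ (binding, variable, protected name, compound; $\bullet$ left associative). ${\sf bn}(p)$ is the set of binding names; communicable patterns contain no protected or binding names. Unification $\{p\|q\}$: $\{x\|x\}=\{x\|\ulcorner x\urcorner\}=\{\ulcorner x\urcorner\|x\}=\{\ulcorner x\urcorner\|\ulcorner x\urcorner\}=(\{\},\{\})$; $\{\lambda x\|q\}=(\{q/x\},\{\})$ and $\{q\|\lambda x\}=(\{\},\{q/x\})$ if $q$ communicable; $\{p_1\bullet p_2\|q_1\bullet q_2\}=(\sigma_1\cup\sigma_2,\rho_1\cup\rho_2)$ if $\{p_i\|q_i\}=(\sigma_i,\rho_i)$; undefined otherwise. Linda templates are sequences $\tilde t=t_1,\ldots,t_k$ of template fields $t::=\lambda x\mid\ulcorner b\urcorner$ ($b$ a name; input variables pairwise distinct), data are sequences of names $\tilde b$. Matching: ${\sf Match}(;)=\{\}$, ${\sf Match}(\ulcorner b\urcorner;b)=\{\}$,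 ${\sf Match}(\lambda x;b)=\{b/x\}$, ${\sf Match}(t,\tilde t;b,\tilde b)=\sigma_1\uplus\sigma_2$ if ${\sf Match}(t;b)=\sigma_1$ and ${\sf Match}(\tilde t;\tilde b)=\sigma_2$ (disjoint union), undefined otherwise. Fix a name $\mathsf c$. The translations into CPC patterns are: ${\sf patt}()=\lambda x\bullet\mathsf c$ with $x$ fresh; ${\sf patt}(t,\tilde t)=t\bullet\mathsf c\bullet{\sf patt}(\tilde t)$ (a template field $\lambda x$ or $\ulcorner b\urcorner$ read as the CPC pattern of the same form, and ${\sf patt}(\tilde t)$ a single sub-pattern); ${\sf patb}()=\mathsf c\bullet\lambda x$ with $x$ fresh; ${\sf patb}(b,\tilde b)=b\bullet\lambda x\bullet{\sf patb}(\tilde b)$ with $x$ fresh. In the claim, $x$ denotes the fresh binding name introduced by the clause ${\sf patt}()$. *)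

theory Defs
  imports Main
begin

datatype 'n pat =
    PBind 'n
  | PVar 'n
  | PProt 'n
  | PComp "'n pat" "'n pat"

type_synonym 'n subst = "('n \<times> 'n pat) set"   (* a substitution {q/x} is the pair (x, q) *)

fun bn :: "'n pat \<Rightarrow> 'n set" where
  "bn (PBind x) = {x}"
| "bn (PVar x) = {}"
| "bn (PProt x) = {}"
| "bn (PComp p q) = bn p \<union> bn q"

fun communicable :: "'n pat \<Rightarrow> bool" where
  "communicable (PVar x) = True"
| "communicable (PComp p q) = (communicable p \<and> communicable q)"
| "communicable (PBind x) = False"
| "communicable (PProt x) = False"

fun unify :: "'n pat \<Rightarrow> 'n pat \<Rightarrow> ('n subst \<times> 'n subst) option" where
  "unify (PVar x) (PVar y) = (if x = y then Some ({}, {}) else None)"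
| "unify (PVar x) (PProt y) = (if x = y then Some ({}, {}) else None)"
| "unify (PProt x) (PVar y) = (if x = y then Some ({}, {}) else None)"
| "unify (PProt x) (PProt y) = (if x = y then Some ({}, {}) else None)"
| "unify (PBind x) q = (if communicable q then Some ({(x, q)}, {}) else None)"
| "unify p (PBind x) = (if communicable p then Some ({}, {(x, p)}) else None)"
| "unify (PComp p1 p2) (PComp q1 q2) =
     (case (unify p1 q1, unify p2 q2) of
        (Some (s1, r1), Some (s2, r2)) \<Rightarrow> Some (s1 \<union> s2, r1 \<union> r2)
      | _ \<Rightarrow> None)"
| "unify _ _ = None"

datatype 'n tfield = TBind 'n | TProt 'n

fun tvar :: "'n tfield \<Rightarrow> 'n list" where
  "tvar (TBind x) = [x]"
| "tvar (TProt b) = []"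

definition tvars :: "'n tfield list \<Rightarrow> 'n list" where
  "tvars ts = concat (map tvar ts)"

fun tname :: "'n tfield \<Rightarrow> 'n" where
  "tname (TBind x) = x"
| "tname (TProt b) = b"

definition tnames :: "'n tfield list \<Rightarrow> 'n set" where
  "tnames ts = tname ` set ts"

fun match_field :: "'n tfield \<Rightarrow> 'n \<Rightarrow> ('n \<rightharpoonup> 'n) option" where
  "match_field (TProt b') b = (if b' = b then Some Map.empty else None)"
| "match_field (TBind x) b = Some [x \<mapsto> b]"

fun Match :: "'n tfield list \<Rightarrow> 'n list \<Rightarrow> ('n \<rightharpoonup> 'n) option" where
  "Match [] [] = Some Map.empty"
| "Match (t # ts) (b # bs) =
     (case (match_field t b, Match ts bs) of
        (Some s1, Some s2) \<Rightarrow> if dom s1 \<inter> dom s2 = {} then Some (s1 ++ s2) else None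
      | _ \<Rightarrow> None)"
| "Match _ _ = None"

fun fld :: "'n tfield \<Rightarrow> 'n pat" where
  "fld (TBind x) = PBind x"
| "fld (TProt b) = PProt b"

text \<open>patt c ts x: x is the fresh binding name used in the clause patt().\<close>
fun patt :: "'n \<Rightarrow> 'n tfield list \<Rightarrow> 'n \<Rightarrow> 'n pat" where
  "patt c [] x = PComp (PBind x) (PVar c)"
| "patt c (t # ts) x = PComp (PComp (fld t) (PVar c)) (patt c ts x)"

text \<open>patb c bs xs: the i-th fresh binding name is xs!i (length xs = length bs + 1).\<close>
fun patb :: "'n \<Rightarrow> 'n list \<Rightarrow> 'n list \<Rightarrow> 'n pat" where
  "patb c [] xs = PComp (PVar c) (PBind (hd xs))"
| "patb c (b # bs) xs = PComp (PComp (PVar b) (PBind (hd xs))) (patb c bs (tl xs))"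

definition lift_subst :: "('n \<rightharpoonup> 'n) \<Rightarrow> 'n subst" where
  "lift_subst \<sigma> = {(y, PVar z) | y z. \<sigma> y = Some z}"

end

theory Submission
  imports Defs
begin

text \<open>Unifying patt ts with patb bs proceeds field by field: a binder of the template
  receives the corresponding name of the datum, a protected name must equal it, and every
  binder of patb receives c (from the PVar c beside each field of patt and at its end).
  Hence the unifier exists exactly when Match succeeds, and its left half is the Match
  substitution plus {c/x}. Distinctness of the template variables makes the pieces of the
  Match substitution disjoint, and freshness of x lets us cancel {c/x} again.\<close>

lemma dom_Match: "Match ts bs = Some s \<Longrightarrow> dom s = set (tvars ts)"
proof (induction ts bs arbitrary: s rule: Match.induct)
  case (2 t ts b bs)
  then show ?case
  proof (cases t)
    case (TBind y)
    then obtain s2 where "Match ts bs = Some s2" "s = [y \<mapsto> b] ++ s2"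
      using 2 by (auto split: option.splits if_splits)
    then show ?thesis using 2 TBind by (simp add: tvars_def dom_map_add)
  next
    case (TProt y)
    then have "Match ts bs = Some s" using 2 by (auto split: option.splits if_splits)
    then show ?thesis using 2 TProt by (simp add: tvars_def)
  qed
qed (auto simp: tvars_def)

lemma bn_patb: "length xs = length bs + 1 \<Longrightarrow> bn (patb c bs xs) = set xs"
proof (induction bs arbitrary: xs)
  case Nil then show ?case by (cases xs) auto
next
  case (Cons b bs) then show ?case by (cases xs) auto
qed

lemma bn_patt: "bn (patt c ts x) = set (tvars ts) \<union> {x}"
proof (induction ts)
  case (Cons t ts) then show ?case by (cases t) (auto simp: tvars_def)
qed (auto simp: tvars_def)

lemma notin_tvars_if_notin_tnames: "x \<notin> tnames ts \<Longrightarrow> x \<notin> set (tvars ts)"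
proof (induction ts)
  case (Cons t ts) then show ?case by (cases t) (auto simp: tvars_def tnames_def)
qed (simp add: tvars_def)

lemma lift_subst_empty [simp]: "lift_subst Map.empty = {}"
  by (simp add: lift_subst_def)

lemma lift_subst_singleton [simp]: "lift_subst [y \<mapsto> b] = {(y, PVar b)}"
  by (auto simp: lift_subst_def)

lemma lift_subst_map_add:
  "dom s1 \<inter> dom s2 = {} \<Longrightarrow> lift_subst (s1 ++ s2) = lift_subst s1 \<union> lift_subst s2"
  unfolding lift_subst_def by (auto simp: map_add_def split: option.splits) (auto dest: domI)

lemma lift_subst_inject: "lift_subst s = lift_subst s' \<longleftrightarrow> s = s'"
proof
  assume eq: "lift_subst s = lift_subst s'"
  have "s y = Some z \<longleftrightarrow> s' y = Some z" for y z
    using arg_cong[OF eq, of "\<lambda>S. (y, PVar z) \<in> S"] by (simp add: lift_subst_def)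
  then show "s = s'"
    by (metis not_Some_eq ext)
qed simp

lemma fst_notin_lift_subst: "x \<notin> dom s \<Longrightarrow> (x, p) \<notin> lift_subst s"
  by (auto simp: lift_subst_def)

lemma unify_patt_patb:
  assumes "distinct (tvars ts)" and "length xs = length bs + 1"
  shows "unify (patt c ts x) (patb c bs xs) =
    map_option (\<lambda>\<sigma>. (lift_subst \<sigma> \<union> {(x, PVar c)}, (\<lambda>y. (y, PVar c)) ` set xs)) (Match ts bs)"
  using assms
proof (induction ts arbitrary: bs xs)
  case Nil
  then show ?case
    by (cases bs; cases xs) auto
next
  case (Cons t ts)
  have distinct_ts: "distinct (tvars ts)" and fresh_t: "set (tvar t) \<inter> set (tvars ts) = {}"
    using Cons.prems(1) by (auto simp: tvars_def)
  show ?case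
  proof (cases bs)
    case Nil
    then show ?thesis by (cases t) simp_all
  next
    case (Cons b bs')
    with Cons.prems(2) obtain h xs' where xs: "xs = h # xs'" "length xs' = length bs' + 1"
      by (cases xs) auto
    note IH = Cons.IH[OF distinct_ts xs(2)]
    show ?thesis
    proof (cases "Match ts bs'")
      case None
      then show ?thesis using IH xs Cons by (cases t) (auto split: option.splits)
    next
      case (Some s)
      have "dom s = set (tvars ts)" using dom_Match[OF Some] .
      then have "dom [y \<mapsto> b] \<inter> dom s = {}" if "t = TBind y" for y
        using fresh_t that by auto
      then show ?thesis using IH xs Cons Some
        by (cases t) (auto simp: lift_subst_map_add)
    qed
  qed
qed

theorem lemma4p6:
  fixes c x :: 'n and ts :: "'n tfield list" and bs xs :: "'n list"
    and \<sigma> :: "'n \<rightharpoonup> 'n"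
  assumes "distinct (tvars ts)"
    and "x \<noteq> c" and "x \<notin> tnames ts"
    and "length xs = length bs + 1" and "distinct xs"
    and "c \<notin> set xs" and "set xs \<inter> set bs = {}"
  shows "Match ts bs = Some \<sigma> \<longleftrightarrow>
           (unify (patt c ts x) (patb c bs xs)
              = Some (lift_subst \<sigma> \<union> {(x, PVar c)},
                      (\<lambda>y. (y, PVar c)) ` bn (patb c bs xs))
            \<and> x \<notin> dom \<sigma> \<and> dom \<sigma> \<union> {x} = bn (patt c ts x))"
    (is "_ \<longleftrightarrow> ?unifies \<and> ?x_fresh \<and> ?bn_patt")
proof -
  have x_fresh: "x \<notin> set (tvars ts)"
    using assms(3) by (rule notin_tvars_if_notin_tnames)
  have unify_eq: "unify (patt c ts x) (patb c bs xs) = map_option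
      (\<lambda>s. (lift_subst s \<union> {(x, PVar c)}, (\<lambda>y. (y, PVar c)) ` bn (patb c bs xs))) (Match ts bs)"
    using unify_patt_patb[OF assms(1,4)] bn_patb[OF assms(4)] by simp
  show ?thesis
  proof
    assume match: "Match ts bs = Some \<sigma>"
    then have "dom \<sigma> = set (tvars ts)" by (rule dom_Match)
    with match show "?unifies \<and> ?x_fresh \<and> ?bn_patt"
      using unify_eq x_fresh bn_patt[of c ts x] by simp
  next
    assume rhs: "?unifies \<and> ?x_fresh \<and> ?bn_patt"
    then obtain s where match: "Match ts bs = Some s"
      and lifted_eq: "lift_subst s \<union> {(x, PVar c)} = lift_subst \<sigma> \<union> {(x, PVar c)}"
      using unify_eq by auto
    have "x \<notin> dom s" using dom_Match[OF match] x_fresh by simp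
    with rhs have "(x, PVar c) \<notin> lift_subst s" "(x, PVar c) \<notin> lift_subst \<sigma>"
      by (simp_all add: fst_notin_lift_subst)
    with lifted_eq have "lift_subst s = lift_subst \<sigma>" by blast
    with match show "Match ts bs = Some \<sigma>" by (simp add: lift_subst_inject)
  qed
qed

end
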